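(* Let $\mathcal{S} = s_1, s_2, \dots$ be the integer sequence in which $s_i$ is the position of the lowest-order $1$ bit in the binary representation of $i$ (i.e. $s_i = 1 + \nu_2(i)$, where $\nu_2(i)$ is the exponent of $2$ in $i$). Then for all integers $k, r > 0$, \[ \sum_{i=1}^{k} s_i \leq \sum_{i=r}^{r+k-1} s_i . \] That is, the prefix of length $k$ of $\mathcal{S}$ has the smallest sum among all contiguous subsequences of length $k$ of $\mathcal{S}$.
   Context: The sequence $\mathcal{S}$ (the "ruler function") begins $1,2,1,3,1,2,1,4,1,2,1,3,1,2,1,5,\dots$; $s_i$ is the number of bits that must be counted from right to left to reach the first $1$ in the binary representation of $i$. *)

theory Defs
  imports "HOL-Computational_Algebra.Computational_Algebra"
begin

definition ruler :: "nat \<Rightarrow> nat" where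
  "ruler i = 1 + multiplicity (2::nat) i"

end

theory Submission
  imports Defs
begin

text \<open>Summing the ruler sequence over a window of \<open>k\<close> positive integers gives \<open>k\<close> plus the
  2-adic valuation of the product of the window. The product of any \<open>k\<close> consecutive positive
  integers is \<open>k!\<close> times a binomial coefficient, hence a multiple of the product \<open>k!\<close> of
  the first window, and the valuation is monotone under divisibility.\<close>

lemma sum_ruler_eq_card_plus_multiplicity_prod:
  assumes "finite A" "0 \<notin> A"
  shows "(\<Sum>i\<in>A. ruler i) = card A + multiplicity (2::nat) (\<Prod>A)"
proof -
  have "multiplicity (2::nat) (\<Prod>A) = (\<Sum>i\<in>A. multiplicity 2 i)"
    using assms by (intro prime_elem_multiplicity_prod_distrib) auto
  then show ?thesis
    unfolding ruler_def sum.distrib by simp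
qed

lemma prod_consecutive_eq_fact_mult_binomial:
  fixes n k :: nat
  shows "\<Prod>{n+1..n+k} = fact k * (n + k choose k)"
proof -
  have "fact n * \<Prod>{n+1..n+k} = fact (n + k)"
    using fact_eq_fact_times[of n "n + k"] by simp
  also have "\<dots> = fact n * (fact k * (n + k choose k))"
    using binomial_fact_lemma[of k "n + k"] by (simp add: ac_simps)
  finally show ?thesis
    by (simp del: of_nat_prod)
qed

theorem lemma1:
  fixes k r :: nat
  assumes "k > 0" and "r > 0"
  shows "(\<Sum>i=1..k. ruler i) \<le> (\<Sum>i=r..r+k-1. ruler i)"
proof -
  obtain n where r: "r = n + 1"
    using \<open>r > 0\<close> by (metis Suc_eq_plus1 gr0_implies_Suc)
  have window: "{r..r+k-1} = {n+1..n+k}"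
    using \<open>k > 0\<close> r by auto
  have "fact k dvd \<Prod>{n+1..n+k}"
    by (rule dvdI) (rule prod_consecutive_eq_fact_mult_binomial)
  then have "multiplicity (2::nat) (fact k) \<le> multiplicity 2 (\<Prod>{n+1..n+k})"
    by (intro dvd_imp_multiplicity_le) auto
  then show ?thesis
    unfolding window by (simp add: sum_ruler_eq_card_plus_multiplicity_prod fact_prod)
qed

end
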